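(* Under the standing assumptions on $c$, $\mathcal{X}$, $\mathcal{Y}$, let $\nu\in\mathbb{P}_{\textup{cost}}(\mathcal{Y})$, $\mu\in\mathbb{P}_{\textup{cost}}(\mathcal{X})$, and let $f:\mathcal{Y}\to\mathbb{R}$ be an optimal $c$-concave Kantorovich potential for the transport of $\nu$ to $\mu$. Suppose that $f$ is $\lambda$-convex for some $\lambda\in\mathbb{R}$ (i.e. $y\mapsto f(y)-\frac{\lambda}{2}|y|^2$ is convex), that $\mu$ is absolutely continuous with respect to Lebesgue measure, and that for each $y$ the map $x\mapsto\nabla_yc(x,y)$ has an inverse which is Lipschitz with a constant uniform in $y$. Then $\nu$ is absolutely continuous with respect to Lebesgue measure.
   Context: Standing assumptions. $\mathcal{X},\mathcal{Y}\subset\mathbb{R}^d$ are open sets and $c:\mathcal{X}\times\mathcal{Y}\to[0,\infty)$ satisfies: (A1) $c\in C^2(\mathcal{X}\times\mathcal{Y})$ and $c$ is bi-twisted, i.e. $y\mapsto\nabla_x c(x,y)$ and $x\mapsto\nabla_y c(x,y)$ are injective; (A2) for every $b\in\mathbb{R}$ and $(x',y')\in\mathcal{X}\times\mathcal{Y}$ the sets $\{x\in\mathcal{X}:c(x,y')\le b\}$ and $\{y\in\mathcal{Y}:c(x',y)\le b\}$ are compact; (A3) there is a point $(x_0,y_0)\in\mathcal{X}\times\mathcal{Y}$ such that for every $\varepsilon>0$ there is $B_\varepsilon>0$ with $(1-\varepsilon)c(x_0,y)-B_\varepsilon c(x,y_0)\le c(x,y)\le(1+\varepsilon)c(x_0,y)+B_\varepsilon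 c(x,y_0)$ and $(1-\varepsilon)c(x,y_0)-B_\varepsilon c(x_0,y)\le c(x,y)\le(1+\varepsilon)c(x,y_0)+B_\varepsilon c(x_0,y)$ for all $(x,y)\in\mathcal{X}\times\mathcal{Y}$. Define $\mathbb{P}_{\textup{cost}}(\mathcal{X})=\{\mu\in\mathcal{P}(\mathcal{X}):\int c(x,y_0)\,\mathrm{d}\mu(x)<\infty\}$ and $\mathbb{P}_{\textup{cost}}(\mathcal{Y})=\{\nu\in\mathcal{P}(\mathcal{Y}):\int c(x_0,y)\,\mathrm{d}\nu(y)<\infty\}$. $K_c(\mu,\nu)=\inf_{\pi\in\Pi(\mu,\nu)}\int c\,\mathrm{d}\pi$. For $f:\mathcal{Y}\to\mathbb{R}$, $f^c(x)=\inf_y(c(x,y)-f(y))$; $f$ is $c$-concave if it equals its double $c$-transform; a $c$-concave $f$ is an optimal Kantorovich potential for the transport of $\nu$ to $\mu$ if $K_c(\mu,\nu)=\int f^c\,\mathrm{d}\mu+\int f\,\mathrm{d}\nu$. *)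

theory Defs
  imports "HOL-Analysis.Analysis" "HOL-Probability.Probability"
begin

definition C2_on :: "'b::euclidean_space set \<Rightarrow> ('b \<Rightarrow> real) \<Rightarrow> bool" where
  "C2_on S g \<longleftrightarrow> (\<exists>(g' :: 'b \<Rightarrow> ('b \<Rightarrow>\<^sub>L real)) (g'' :: 'b \<Rightarrow> ('b \<Rightarrow>\<^sub>L ('b \<Rightarrow>\<^sub>L real))).
      (\<forall>z\<in>S. (g has_derivative blinfun_apply (g' z)) (at z)) \<and>
      (\<forall>z\<in>S. (g' has_derivative blinfun_apply (g'' z)) (at z)) \<and>
      continuous_on S g'')"

definition grad_x :: "('a::real_inner \<Rightarrow> 'a \<Rightarrow> real) \<Rightarrow> 'a \<Rightarrow> 'a \<Rightarrow> 'a" where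
  "grad_x c x y = (SOME D. GDERIV (\<lambda>x'. c x' y) x :> D)"

definition grad_y :: "('a::real_inner \<Rightarrow> 'a \<Rightarrow> real) \<Rightarrow> 'a \<Rightarrow> 'a \<Rightarrow> 'a" where
  "grad_y c x y = (SOME D. GDERIV (\<lambda>y'. c x y') y :> D)"

definition bi_twisted :: "'a::real_inner set \<Rightarrow> 'a set \<Rightarrow> ('a \<Rightarrow> 'a \<Rightarrow> real) \<Rightarrow> bool" where
  "bi_twisted X Y c \<longleftrightarrow> (\<forall>x\<in>X. inj_on (\<lambda>y. grad_x c x y) Y) \<and> (\<forall>y\<in>Y. inj_on (\<lambda>x. grad_y c x y) X)"

definition standing_assms ::
  "'a::euclidean_space set \<Rightarrow> 'a set \<Rightarrow> ('a \<Rightarrow> 'a \<Rightarrow> real) \<Rightarrow> 'a \<Rightarrow> 'a \<Rightarrow> bool" where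
  "standing_assms X Y c x0 y0 \<longleftrightarrow>
     open X \<and> open Y \<and> (\<forall>x\<in>X. \<forall>y\<in>Y. 0 \<le> c x y) \<and>
     C2_on (X \<times> Y) (\<lambda>(x, y). c x y) \<and> bi_twisted X Y c \<and>
     (\<forall>b::real. \<forall>x'\<in>X. \<forall>y'\<in>Y. compact {x\<in>X. c x y' \<le> b} \<and> compact {y\<in>Y. c x' y \<le> b}) \<and>
     x0 \<in> X \<and> y0 \<in> Y \<and>
     (\<forall>\<epsilon>>0. \<exists>B>0. \<forall>x\<in>X. \<forall>y\<in>Y.
        (1 - \<epsilon>) * c x0 y - B * c x y0 \<le> c x y \<and> c x y \<le> (1 + \<epsilon>) * c x0 y + B * c x y0 \<and>
        (1 - \<epsilon>) * c x y0 - B * c x0 y \<le> c x y \<and> c x y \<le> (1 + \<epsilon>) * c x y0 + B * c x0 y)"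

definition prob_on :: "'a::euclidean_space set \<Rightarrow> 'a measure \<Rightarrow> bool" where
  "prob_on S m \<longleftrightarrow> prob_space m \<and> sets m = sets borel \<and> emeasure m S = 1"

definition Pcost_X :: "'a::euclidean_space set \<Rightarrow> ('a \<Rightarrow> 'a \<Rightarrow> real) \<Rightarrow> 'a \<Rightarrow> 'a measure \<Rightarrow> bool" where
  "Pcost_X X c y0 \<mu> \<longleftrightarrow> prob_on X \<mu> \<and> set_integrable \<mu> X (\<lambda>x. c x y0)"

definition Pcost_Y :: "'a::euclidean_space set \<Rightarrow> ('a \<Rightarrow> 'a \<Rightarrow> real) \<Rightarrow> 'a \<Rightarrow> 'a measure \<Rightarrow> bool" where
  "Pcost_Y Y c x0 \<nu> \<longleftrightarrow> prob_on Y \<nu> \<and> set_integrable \<nu> Y (\<lambda>y. c x0 y)"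

definition couplings :: "'a::euclidean_space measure \<Rightarrow> 'a measure \<Rightarrow> ('a \<times> 'a) measure set" where
  "couplings \<mu> \<nu> = {\<pi>. prob_space \<pi> \<and> sets \<pi> = sets borel \<and>
      distr \<pi> borel fst = \<mu> \<and> distr \<pi> borel snd = \<nu>}"

definition Kc :: "'a::euclidean_space set \<Rightarrow> 'a set \<Rightarrow> ('a \<Rightarrow> 'a \<Rightarrow> real) \<Rightarrow> 'a measure \<Rightarrow> 'a measure \<Rightarrow> ennreal" where
  "Kc X Y c \<mu> \<nu> = (INF \<pi>\<in>couplings \<mu> \<nu>. \<integral>\<^sup>+ z\<in>X \<times> Y. ennreal (c (fst z) (snd z)) \<partial>\<pi>)"

definition ctrans :: "'a set \<Rightarrow> ('a \<Rightarrow> 'a \<Rightarrow> real) \<Rightarrow> ('a \<Rightarrow> real) \<Rightarrow> 'a \<Rightarrow> ereal" where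
  "ctrans Y c f x = (INF y\<in>Y. ereal (c x y - f y))"

definition ctrans_back :: "'a set \<Rightarrow> ('a \<Rightarrow> 'a \<Rightarrow> real) \<Rightarrow> ('a \<Rightarrow> ereal) \<Rightarrow> 'a \<Rightarrow> ereal" where
  "ctrans_back X c g y = (INF x\<in>X. ereal (c x y) - g x)"

definition c_concave :: "'a set \<Rightarrow> 'a set \<Rightarrow> ('a \<Rightarrow> 'a \<Rightarrow> real) \<Rightarrow> ('a \<Rightarrow> real) \<Rightarrow> bool" where
  "c_concave X Y c f \<longleftrightarrow> (\<forall>y\<in>Y. ereal (f y) = ctrans_back X c (ctrans Y c f) y)"

definition optimal_potential ::
  "'a::euclidean_space set \<Rightarrow> 'a set \<Rightarrow> ('a \<Rightarrow> 'a \<Rightarrow> real) \<Rightarrow> 'a measure \<Rightarrow> 'a measure \<Rightarrow> ('a \<Rightarrow> real) \<Rightarrow> bool" where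
  "optimal_potential X Y c \<mu> \<nu> f \<longleftrightarrow>
     c_concave X Y c f \<and>
     (AE x in \<mu>. x \<in> X \<longrightarrow> \<bar>ctrans Y c f x\<bar> \<noteq> \<infinity>) \<and>
     set_integrable \<mu> X (\<lambda>x. real_of_ereal (ctrans Y c f x)) \<and>
     set_integrable \<nu> Y f \<and>
     enn2ereal (Kc X Y c \<mu> \<nu>) =
       ereal (set_lebesgue_integral \<mu> X (\<lambda>x. real_of_ereal (ctrans Y c f x))
              + set_lebesgue_integral \<nu> Y f)"

end

(*
  Write g for the c-transform of f and call (x, y) a contact pair if y maximises f - c x on Y.
  At a contact pair f is touched from above at y by the C^2 function c x (plus a constant), while
  f - lam/2 |.|^2 is convex. A convex function lying below paraboloids at two nearby points y, y'
  has subgradients there that differ by O(|y - y'|), so grad_y c x y depends Lipschitz-continuously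
  on y along contact pairs, locally uniformly for x in a compact set. The uniformly Lipschitz inverse
  of grad_y c (., y) then makes x a locally Lipschitz function of y, so the points x in contact with
  a Lebesgue-null set of points y form a null set, which is mu-null.
  On the other hand, optimality of f means that the gap c x y - g x - f y >= 0 has integral below
  eps * delta under a coupling of mu and nu whose cost is within eps * delta of K_c; by Markov's
  inequality such a coupling gives mass below eps to the pairs that are not delta-approximate
  contact pairs. Together with inner regularity this shows that nu vanishes on compact null sets.
*)

theory Submission
  imports Defs
begin

section \<open>Partial gradients of the cost\<close>

lemma grad_y_inner_eq:
  fixes c :: "'a::euclidean_space \<Rightarrow> 'a \<Rightarrow> real"
  assumes "(c x has_derivative l) (at y)"
  shows "grad_y c x y \<bullet> k = l k"
proof -
  have "linear l" using assms has_derivative_linear by blast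
  then have "(\<lambda>h. h \<bullet> adjoint l 1) = l"
    by (intro ext) (simp add: adjoint_works)
  then have "GDERIV (c x) y :> adjoint l 1" unfolding gderiv_def using assms by simp
  then have "GDERIV (c x) y :> grad_y c x y" unfolding grad_y_def by (rule someI)
  then have "(\<lambda>h. h \<bullet> grad_y c x y) = l"
    unfolding gderiv_def using has_derivative_unique[OF _ assms] by blast
  then show ?thesis by (metis inner_commute)
qed

lemma has_derivative_partial_snd:
  assumes "((\<lambda>(x, y). c x y) has_derivative A) (at (x, y))"
  shows "(c x has_derivative (\<lambda>k. A (0, k))) (at y within S)"
proof -
  have "((\<lambda>w. (x, w)) has_derivative (\<lambda>k. (0, k))) (at y within S)"
    by (auto intro!: derivative_eq_intros)
  from has_derivative_compose[OF this, of "\<lambda>(x, y). c x y" A] assms show ?thesis by simp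
qed

lemma grad_y_inner_eq_partial:
  fixes c :: "'a::euclidean_space \<Rightarrow> 'a \<Rightarrow> real"
  assumes "((\<lambda>(x, y). c x y) has_derivative A) (at (x, y))"
  shows "grad_y c x y \<bullet> k = A (0, k)"
  using has_derivative_partial_snd[OF assms, of UNIV] by (intro grad_y_inner_eq) simp

lemma norm_grad_y_diff_le:
  fixes c :: "'a::euclidean_space \<Rightarrow> 'a \<Rightarrow> real"
  assumes "((\<lambda>(x, y). c x y) has_derivative blinfun_apply A) (at (x, y))"
    and "((\<lambda>(x, y). c x y) has_derivative blinfun_apply A') (at (x', y'))"
  shows "norm (grad_y c x y - grad_y c x' y') \<le> norm (A - A')"
proof -
  define v where "v = grad_y c x y - grad_y c x' y'"
  have "norm v * norm v = grad_y c x y \<bullet> v - grad_y c x' y' \<bullet> v"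
    by (simp add: v_def power2_norm_eq_inner inner_diff_left flip: power2_eq_square)
  also have "\<dots> = blinfun_apply (A - A') (0, v)"
    using grad_y_inner_eq_partial[OF assms(1)] grad_y_inner_eq_partial[OF assms(2)]
    by (simp add: blinfun.diff_left)
  also have "\<dots> \<le> norm (A - A') * norm ((0::'a), v)"
    by (rule order_trans[OF abs_ge_self]) (metis norm_blinfun real_norm_def)
  finally have "norm v * norm v \<le> norm (A - A') * norm v" by simp
  then show ?thesis
    by (cases "v = 0") (simp_all add: v_def mult_le_cancel_right)
qed

lemma blinfun_derivative_lipschitz_on_convex:
  fixes g' :: "'a::euclidean_space \<Rightarrow> 'b::real_normed_vector"
    and g'' :: "'a \<Rightarrow> 'a \<Rightarrow>\<^sub>L 'b"
  assumes "\<forall>z\<in>S. (g' has_derivative blinfun_apply (g'' z)) (at z)"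
    and "continuous_on S g''" and "compact C" and "C \<subseteq> S"
  obtains M where "M \<ge> 0"
    and "\<And>T z w. convex T \<Longrightarrow> T \<subseteq> C \<Longrightarrow> z \<in> T \<Longrightarrow> w \<in> T \<Longrightarrow> norm (g' z - g' w) \<le> M * norm (z - w)"
proof -
  have "compact (g'' ` C)"
    by (rule compact_continuous_image[OF continuous_on_subset[OF assms(2,4)] assms(3)])
  then obtain M where M: "M > 0" "\<And>z. z \<in> C \<Longrightarrow> norm (g'' z) \<le> M"
    using compact_imp_bounded bounded_pos by (metis image_eqI)
  have lip: "norm (g' z - g' w) \<le> M * norm (z - w)"
    if T: "convex T" "T \<subseteq> C" and zw: "z \<in> T" "w \<in> T" for T z w
  proof (rule differentiable_bound[of T g' "\<lambda>z. blinfun_apply (g'' z)"])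
    fix u assume "u \<in> T"
    then have "u \<in> C" using T by blast
    then show "(g' has_derivative blinfun_apply (g'' u)) (at u within T)"
      using assms(1,4) by (blast intro: has_derivative_at_withinI)
    show "onorm (blinfun_apply (g'' u)) \<le> M"
      using M(2)[OF \<open>u \<in> C\<close>] by (simp add: norm_blinfun.rep_eq)
  qed (use T zw in auto)
  show ?thesis
  proof (rule that)
    show "M \<ge> 0" using M(1) by simp
  qed (rule lip)
qed

lemma cost_taylor_bound:
  fixes c :: "'a::euclidean_space \<Rightarrow> 'a \<Rightarrow> real"
  assumes d1: "\<forall>z\<in>X \<times> Y. ((\<lambda>(x, y). c x y) has_derivative blinfun_apply (g' z)) (at z)"
    and x: "x \<in> X" and seg: "closed_segment y z \<subseteq> Y"
    and lip: "\<And>w. w \<in> closed_segment y z \<Longrightarrow> norm (g' (x, w) - g' (x, y)) \<le> M * norm (w - y)"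
    and M: "M \<ge> 0"
  shows "c x z \<le> c x y + grad_y c x y \<bullet> (z - y) + M * (norm (z - y))\<^sup>2"
proof -
  define D where "D = (\<lambda>w k. blinfun_apply (g' (x, w)) (0, k))"
  have "norm (c x z - c x y - D y (z - y)) \<le> norm (z - y) * (M * norm (z - y))"
  proof (rule differentiable_bound_linearization[where S = "closed_segment y z" and f' = D])
    fix t :: real assume "t \<in> {0..1}"
    then show "y + t *\<^sub>R (z - y) \<in> closed_segment y z"
      by (auto simp: closed_segment_def algebra_simps intro!: exI[of _ t])
  next
    fix w assume w: "w \<in> closed_segment y z"
    then have "((\<lambda>(x, y). c x y) has_derivative blinfun_apply (g' (x, w))) (at (x, w))"
      using d1 x seg by auto
    then show "(c x has_derivative D w) (at w within closed_segment y z)"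
      unfolding D_def by (rule has_derivative_partial_snd)
    show "onorm (D w - D y) \<le> M * norm (z - y)"
    proof (rule onorm_le)
      fix k :: 'a
      have "norm ((D w - D y) k) = norm (blinfun_apply (g' (x, w) - g' (x, y)) (0, k))"
        by (simp add: D_def blinfun.diff_left)
      also have "\<dots> \<le> norm (g' (x, w) - g' (x, y)) * norm ((0::'a), k)" by (rule norm_blinfun)
      also have "\<dots> \<le> (M * norm (w - y)) * norm k" by (simp add: lip w mult_right_mono)
      also have "\<dots> \<le> M * norm (z - y) * norm k"
        using dist_in_closed_segment[OF w] M
        by (intro mult_right_mono mult_left_mono) (auto simp: dist_norm norm_minus_commute)
      finally show "norm ((D w - D y) k) \<le> M * norm (z - y) * norm k" .
    qed
  qed auto
  moreover have "grad_y c x y \<bullet> (z - y) = D y (z - y)"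
    unfolding D_def using d1 x seg by (intro grad_y_inner_eq_partial[of c _ x y]) auto
  ultimately show ?thesis by (simp add: power2_eq_square mult_ac abs_le_iff)
qed

section \<open>Convex functions below paraboloids\<close>

lemma le_of_le_plus_multiples:
  fixes a b C e :: real
  assumes "e > 0" and "\<And>t. 0 < t \<Longrightarrow> t < e \<Longrightarrow> a \<le> b + C * t"
  shows "a \<le> b"
proof (rule tendsto_lowerbound)
  show "((\<lambda>t. b + C * t) \<longlongrightarrow> b) (at_right 0)"
    by (auto intro!: tendsto_eq_intros)
  show "\<forall>\<^sub>F t in at_right 0. a \<le> b + C * t"
    using assms by (auto simp: eventually_at_right_field intro!: exI[of _ e])
qed simp

lemma convex_on_subgradient_of_upper_quadratic:
  fixes F :: "'a::real_inner \<Rightarrow> real"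
  assumes cv: "convex_on Y F" and \<rho>: "\<rho> > 0" and bY: "ball y \<rho> \<subseteq> Y"
    and up: "\<And>z. z \<in> ball y \<rho> \<Longrightarrow> F z \<le> F y + p \<bullet> (z - y) + M * (norm (z - y))\<^sup>2"
    and zY: "z \<in> Y"
  shows "F y + p \<bullet> (z - y) \<le> F z"
proof (cases "z = y")
  case False
  define w where "w = z - y"
  have nw: "norm w > 0" using False by (simp add: w_def)
  have yY: "y \<in> Y" using bY \<rho> by auto
  show ?thesis
  proof (rule le_of_le_plus_multiples[where e = "min 1 (\<rho> / norm w)" and C = "M * (norm w)\<^sup>2"])
    show "0 < min 1 (\<rho> / norm w)" using nw \<rho> by simp
    fix t :: real assume t0: "0 < t" and te: "t < min 1 (\<rho> / norm w)"
    have t1: "t \<le> 1" using te by simp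
    define u where "u = (1 - t) *\<^sub>R y + t *\<^sub>R z"
    define v where "v = y - t *\<^sub>R w"
    \<comment> \<open>y is the midpoint of u, on the segment towards z, and v, its reflection inside the ball\<close>
    have vb: "v \<in> ball y \<rho>" using te t0 nw by (simp add: v_def dist_norm field_simps)
    have uY: "u \<in> Y" using convex_onD cv yY zY t0 t1 by (auto simp: u_def convex_on_def convex_alt)
    have "(1 - 1/2) *\<^sub>R u + (1/2) *\<^sub>R v = (1/2) *\<^sub>R (u + v)"
      by (simp add: scaleR_add_right)
    also have "u + v = 2 *\<^sub>R y"
      by (simp add: u_def v_def w_def algebra_simps scaleR_2)
    finally have yuv: "y = (1 - 1/2) *\<^sub>R u + (1/2) *\<^sub>R v" by simp
    have h1: "F u \<le> (1 - t) * F y + t * F z"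
      unfolding u_def using convex_onD[OF cv, of t y z] t0 t1 yY zY by simp
    have h2: "F y \<le> (1 - 1/2) * F u + (1/2) * F v"
      using convex_onD[OF cv, of "1/2" u v] uY vb bY yuv by auto
    have h3: "F v \<le> F y - t * (p \<bullet> w) + t\<^sup>2 * (M * (norm w)\<^sup>2)"
      using up[OF vb] t0 by (simp add: v_def power_mult_distrib mult_ac)
    have "t * (F y + p \<bullet> w) \<le> t * (F z + M * (norm w)\<^sup>2 * t)"
      using h1 h2 h3 by (simp add: algebra_simps power2_eq_square)
    then show "F y + p \<bullet> (z - y) \<le> F z + M * (norm w)\<^sup>2 * t"
      using t0 by (simp add: w_def)
  qed
qed simp

lemma norm_le_of_upper_quadratic:
  fixes q y y' :: "'a::real_inner"
  assumes d\<rho>: "2 * norm (y - y') < \<rho>" and M: "M \<ge> 0"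
    and up: "\<And>z. z \<in> ball y \<rho> \<Longrightarrow> q \<bullet> (z - y') \<le> M * (norm (z - y))\<^sup>2"
  shows "norm q \<le> 4 * M * norm (y - y')"
proof (cases "q = 0")
  case False
  define d where "d = norm (y - y')"
  have along_q: "s * norm q \<le> M * s\<^sup>2 + norm q * d" if "0 < s" "s < \<rho>" for s
  proof -
    define z where "z = y + (s / norm q) *\<^sub>R q"
    have "z \<in> ball y \<rho>" using that False by (simp add: z_def dist_norm)
    moreover have "q \<bullet> (z - y') = q \<bullet> (y - y') + s * norm q"
      using False by (simp add: z_def inner_add_right inner_diff_right dot_square_norm power2_eq_square)
    moreover have "norm (z - y) = s" using that False by (simp add: z_def)
    moreover have "- (norm q * d) \<le> q \<bullet> (y - y')"
      using Cauchy_Schwarz_ineq2[of q "y - y'"] by (simp add: d_def abs_le_iff)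
    ultimately show ?thesis using up by fastforce
  qed
  show ?thesis
  proof (cases "d = 0")
    case True
    have "norm q \<le> 0"
    proof (rule le_of_le_plus_multiples[where e = \<rho> and C = M])
      show "0 < \<rho>" using d\<rho> by (smt (verit) norm_ge_zero)
      fix s assume s: "0 < s" "s < \<rho>"
      then have "s * norm q \<le> s * (0 + M * s)"
        using along_q[OF s] True by (simp add: power2_eq_square algebra_simps)
      then show "norm q \<le> 0 + M * s" using s by simp
    qed
    then show ?thesis using False by simp
  next
    case False
    then have "d > 0" by (simp add: d_def)
    moreover have "2 * d * norm q \<le> M * (2 * d)\<^sup>2 + norm q * d"
      using along_q[of "2 * d"] d\<rho> \<open>d > 0\<close> by (simp add: d_def)
    ultimately show ?thesis by (simp add: d_def power2_eq_square algebra_simps)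
  qed
qed (use M in simp)

lemma convex_on_subgradient_lipschitz:
  fixes F :: "'a::real_inner \<Rightarrow> real"
  assumes cv: "convex_on Y F" and b: "ball y \<rho> \<subseteq> Y" "ball y' \<rho> \<subseteq> Y"
    and d\<rho>: "2 * norm (y - y') < \<rho>" and M: "M \<ge> 0"
    and up: "\<And>z. z \<in> ball y \<rho> \<Longrightarrow> F z \<le> F y + p \<bullet> (z - y) + M * (norm (z - y))\<^sup>2"
    and up': "\<And>z. z \<in> ball y' \<rho> \<Longrightarrow> F z \<le> F y' + p' \<bullet> (z - y') + M * (norm (z - y'))\<^sup>2"
  shows "norm (p' - p) \<le> 4 * M * norm (y - y')"
proof (rule norm_le_of_upper_quadratic[OF d\<rho> M])
  have \<rho>: "\<rho> > 0" using d\<rho> by (smt (verit) norm_ge_zero)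
  then have y'Y: "y' \<in> Y" using b(2) by auto
  fix z assume z: "z \<in> ball y \<rho>"
  have "F y' + p' \<bullet> (z - y') \<le> F z"
    using convex_on_subgradient_of_upper_quadratic[OF cv \<rho> b(2) up'] z b(1) by auto
  moreover have "F y + p \<bullet> (y' - y) \<le> F y'"
    using convex_on_subgradient_of_upper_quadratic[OF cv \<rho> b(1) up y'Y] .
  moreover have "(p' - p) \<bullet> (z - y') = p' \<bullet> (z - y') - p \<bullet> (z - y) + p \<bullet> (y' - y)"
    by (simp add: inner_diff_left inner_diff_right)
  ultimately show "(p' - p) \<bullet> (z - y') \<le> M * (norm (z - y))\<^sup>2"
    using up[OF z] by linarith
qed

section \<open>Contact sets\<close>

text \<open>For \<open>\<delta> = 0\<close> this is the c-superdifferential of \<open>f\<close>.\<close>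

definition c_contact :: "'a set \<Rightarrow> ('a \<Rightarrow> 'a \<Rightarrow> real) \<Rightarrow> ('a \<Rightarrow> real) \<Rightarrow> real \<Rightarrow> ('a \<times> 'a) set" where
  "c_contact Y c f \<delta> = {(x, y). y \<in> Y \<and> ereal (c x y - f y - \<delta>) \<le> ctrans Y c f x}"

lemma c_contact_0_iff:
  "(x, y) \<in> c_contact Y c f 0 \<longleftrightarrow> y \<in> Y \<and> (\<forall>z\<in>Y. f z - c x z \<le> f y - c x y)"
  by (auto simp: c_contact_def ctrans_def le_INF_iff)

lemma c_contact_upper_paraboloid:
  fixes f :: "'a::real_inner \<Rightarrow> real"
  assumes contact: "(x, y) \<in> c_contact Y c f 0" and z: "z \<in> Y"
    and taylor: "c x z \<le> c x y + q \<bullet> (z - y) + M * (norm (z - y))\<^sup>2"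
  shows "f z - lam / 2 * (norm z)\<^sup>2 \<le> f y - lam / 2 * (norm y)\<^sup>2
           + (q - lam *\<^sub>R y) \<bullet> (z - y) + (M + \<bar>lam\<bar>) * (norm (z - y))\<^sup>2"
proof -
  have "f z - f y \<le> c x z - c x y" using contact z by (auto simp: c_contact_0_iff)
  moreover have "lam / 2 * (norm z)\<^sup>2
      = lam / 2 * (norm y)\<^sup>2 + lam * (y \<bullet> (z - y)) + lam / 2 * (norm (z - y))\<^sup>2"
    by (simp add: power2_norm_eq_inner inner_diff_left inner_diff_right inner_commute algebra_simps)
  moreover have "(q - lam *\<^sub>R y) \<bullet> (z - y) = q \<bullet> (z - y) - lam * (y \<bullet> (z - y))"
    by (simp add: inner_diff_left)
  moreover have "(M + \<bar>lam\<bar>) * (norm (z - y))\<^sup>2 = M * (norm (z - y))\<^sup>2 + \<bar>lam\<bar> * (norm (z - y))\<^sup>2"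
    by (simp add: distrib_right)
  moreover have "0 \<le> (\<bar>lam\<bar> + lam / 2) * (norm (z - y))\<^sup>2" by simp
  then have "0 \<le> \<bar>lam\<bar> * (norm (z - y))\<^sup>2 + lam / 2 * (norm (z - y))\<^sup>2"
    by (simp add: distrib_right)
  ultimately show ?thesis using taylor by linarith
qed

lemma cost_local_C11_bounds:
  fixes c :: "'a::euclidean_space \<Rightarrow> 'a \<Rightarrow> real"
  assumes "open Y" and C2: "C2_on (X \<times> Y) (\<lambda>(x, y). c x y)"
    and K: "compact K" "K \<subseteq> X" and "y0 \<in> Y"
  obtains R M where "R > 0" "M \<ge> 0" "cball y0 R \<subseteq> Y"
    and "\<And>x y z. x \<in> K \<Longrightarrow> y \<in> cball y0 R \<Longrightarrow> z \<in> cball y0 R \<Longrightarrow>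
           c x z \<le> c x y + grad_y c x y \<bullet> (z - y) + M * (norm (z - y))\<^sup>2"
    and "\<And>x y y'. x \<in> K \<Longrightarrow> y \<in> cball y0 R \<Longrightarrow> y' \<in> cball y0 R \<Longrightarrow>
           norm (grad_y c x y - grad_y c x y') \<le> M * norm (y - y')"
proof -
  obtain g' :: "('a \<times> 'a) \<Rightarrow> ('a \<times> 'a) \<Rightarrow>\<^sub>L real"
    and g'' :: "('a \<times> 'a) \<Rightarrow> ('a \<times> 'a) \<Rightarrow>\<^sub>L (('a \<times> 'a) \<Rightarrow>\<^sub>L real)"
    where d1: "\<forall>z\<in>X \<times> Y. ((\<lambda>(x, y). c x y) has_derivative blinfun_apply (g' z)) (at z)"
      and d2: "\<forall>z\<in>X \<times> Y. (g' has_derivative blinfun_apply (g'' z)) (at z)"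
      and cont: "continuous_on (X \<times> Y) g''"
    using C2 unfolding C2_on_def by blast
  obtain R where R: "R > 0" "cball y0 R \<subseteq> Y" using open_contains_cball assms by blast
  define W where "W = cball y0 R"
  obtain M where M: "M \<ge> 0"
    and M_lip: "\<And>T z w. convex T \<Longrightarrow> T \<subseteq> K \<times> W \<Longrightarrow> z \<in> T \<Longrightarrow> w \<in> T \<Longrightarrow>
                   norm (g' z - g' w) \<le> M * norm (z - w)"
    using blinfun_derivative_lipschitz_on_convex[OF d2 cont compact_Times[OF K(1) compact_cball]] K R
    unfolding W_def by blast
  have lip: "norm (g' (x, w1) - g' (x, w2)) \<le> M * norm (w1 - w2)"
    if "x \<in> K" "w1 \<in> W" "w2 \<in> W" for x w1 w2
    using M_lip[of "{x} \<times> W" "(x, w1)" "(x, w2)"] that by (auto simp: W_def convex_Times)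
  show ?thesis
  proof (rule that[OF R(1) M R(2)])
    fix x y z assume x: "x \<in> K" and yz: "y \<in> cball y0 R" "z \<in> cball y0 R"
    have seg: "closed_segment y z \<subseteq> W" using yz by (simp add: W_def closed_segment_subset)
    have "x \<in> X" using x K by blast
    moreover have "closed_segment y z \<subseteq> Y" using seg R(2) by (simp add: W_def)
    moreover have "norm (g' (x, w) - g' (x, y)) \<le> M * norm (w - y)" if "w \<in> closed_segment y z" for w
      using lip[OF x] seg that yz by (simp add: W_def subset_iff)
    ultimately show "c x z \<le> c x y + grad_y c x y \<bullet> (z - y) + M * (norm (z - y))\<^sup>2"
      using cost_taylor_bound[OF d1 _ _ _ M] by blast
  next
    fix x y y' assume x: "x \<in> K" and yy': "y \<in> cball y0 R" "y' \<in> cball y0 R"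
    then have "(x, y) \<in> X \<times> Y" "(x, y') \<in> X \<times> Y" using K R(2) by blast+
    then have "norm (grad_y c x y - grad_y c x y') \<le> norm (g' (x, y) - g' (x, y'))"
      using d1 by (intro norm_grad_y_diff_le) blast+
    also have "\<dots> \<le> M * norm (y - y')" using lip x yy' by (simp add: W_def)
    finally show "norm (grad_y c x y - grad_y c x y') \<le> M * norm (y - y')" .
  qed
qed

lemma norm_le_lipschitz_inverse_grad_y:
  assumes "\<forall>y\<in>Y. \<exists>g. (\<forall>x\<in>X. g (grad_y c x y) = x) \<and> L-lipschitz_on ((\<lambda>x. grad_y c x y) ` X) g"
    and "y \<in> Y" "x \<in> X" "x' \<in> X"
  shows "norm (x - x') \<le> L * norm (grad_y c x y - grad_y c x' y)"
proof -
  obtain g where g: "\<forall>x\<in>X. g (grad_y c x y) = x" "L-lipschitz_on ((\<lambda>x. grad_y c x y) ` X) g"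
    using assms(1,2) by blast
  have "norm (x - x') = dist (g (grad_y c x y)) (g (grad_y c x' y))"
    using g(1) assms(3,4) by (simp add: dist_norm)
  also have "\<dots> \<le> L * dist (grad_y c x y) (grad_y c x' y)"
    using g(2) assms(3,4) by (intro lipschitz_onD) auto
  finally show ?thesis by (simp add: dist_norm)
qed

lemma c_contact_local_paraboloids:
  fixes c :: "'a::euclidean_space \<Rightarrow> 'a \<Rightarrow> real" and f :: "'a \<Rightarrow> real"
  assumes "open Y" and "C2_on (X \<times> Y) (\<lambda>(x, y). c x y)"
    and K: "compact K" "K \<subseteq> X" and y0: "y0 \<in> Y"
  obtains r M where "r > 0" "M \<ge> 0" "\<And>y. y \<in> ball y0 r \<Longrightarrow> ball y (4 * r) \<subseteq> Y"
    and "\<And>x y z. (x, y) \<in> c_contact Y c f 0 \<Longrightarrow> x \<in> K \<Longrightarrow> y \<in> ball y0 r \<Longrightarrow> z \<in> ball y (4 * r) \<Longrightarrow>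
           f z - lam / 2 * (norm z)\<^sup>2 \<le> f y - lam / 2 * (norm y)\<^sup>2
             + (grad_y c x y - lam *\<^sub>R y) \<bullet> (z - y) + M * (norm (z - y))\<^sup>2"
    and "\<And>x y y'. x \<in> K \<Longrightarrow> y \<in> ball y0 r \<Longrightarrow> y' \<in> ball y0 r \<Longrightarrow>
           norm (grad_y c x y - grad_y c x y') \<le> M * norm (y - y')"
proof -
  obtain R M where R: "R > 0" "cball y0 R \<subseteq> Y" and M: "M \<ge> 0"
    and taylor: "\<And>x y z. x \<in> K \<Longrightarrow> y \<in> cball y0 R \<Longrightarrow> z \<in> cball y0 R \<Longrightarrow>
           c x z \<le> c x y + grad_y c x y \<bullet> (z - y) + M * (norm (z - y))\<^sup>2"
    and grad_lip: "\<And>x y y'. x \<in> K \<Longrightarrow> y \<in> cball y0 R \<Longrightarrow> y' \<in> cball y0 R \<Longrightarrow>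
           norm (grad_y c x y - grad_y c x y') \<le> M * norm (y - y')"
    by (rule cost_local_C11_bounds[OF assms]) blast
  define r where "r = R / 5"
  have balls: "y \<in> cball y0 R" "ball y (4 * r) \<subseteq> cball y0 R" if y: "y \<in> ball y0 r" for y
  proof -
    show "y \<in> cball y0 R" using y R(1) by (simp add: r_def)
    show "ball y (4 * r) \<subseteq> cball y0 R"
    proof
      fix z assume "z \<in> ball y (4 * r)"
      then show "z \<in> cball y0 R" using y dist_triangle[of y0 z y] by (simp add: r_def dist_commute)
    qed
  qed
  show ?thesis
  proof (rule that[of r "M + \<bar>lam\<bar>"])
    show "r > 0" "M + \<bar>lam\<bar> \<ge> 0" using R(1) M by (simp_all add: r_def)
    show "ball y (4 * r) \<subseteq> Y" if "y \<in> ball y0 r" for y using balls(2)[OF that] R(2) by blast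
  next
    fix x y z assume contact: "(x, y) \<in> c_contact Y c f 0" and x: "x \<in> K"
      and y: "y \<in> ball y0 r" and z: "z \<in> ball y (4 * r)"
    have yz: "y \<in> cball y0 R" "z \<in> cball y0 R" using balls[OF y] z by auto
    then have "z \<in> Y" using R(2) by blast
    then show "f z - lam / 2 * (norm z)\<^sup>2 \<le> f y - lam / 2 * (norm y)\<^sup>2
        + (grad_y c x y - lam *\<^sub>R y) \<bullet> (z - y) + (M + \<bar>lam\<bar>) * (norm (z - y))\<^sup>2"
      by (rule c_contact_upper_paraboloid[OF contact _ taylor[OF x yz]])
  next
    fix x y y' assume "x \<in> K" "y \<in> ball y0 r" "y' \<in> ball y0 r"
    then have "norm (grad_y c x y - grad_y c x y') \<le> M * norm (y - y')"
      using grad_lip balls(1) by blast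
    also have "\<dots> \<le> (M + \<bar>lam\<bar>) * norm (y - y')" by (simp add: mult_right_mono)
    finally show "norm (grad_y c x y - grad_y c x y') \<le> (M + \<bar>lam\<bar>) * norm (y - y')" .
  qed
qed

lemma c_contact_locally_lipschitz:
  fixes c :: "'a::euclidean_space \<Rightarrow> 'a \<Rightarrow> real" and f :: "'a \<Rightarrow> real"
  assumes "open Y" and C2: "C2_on (X \<times> Y) (\<lambda>(x, y). c x y)"
    and conv: "convex_on Y (\<lambda>y. f y - lam / 2 * (norm y)\<^sup>2)"
    and inv: "\<forall>y\<in>Y. \<exists>g. (\<forall>x\<in>X. g (grad_y c x y) = x) \<and> L-lipschitz_on ((\<lambda>x. grad_y c x y) ` X) g"
    and K: "compact K" "K \<subseteq> X" and y0: "y0 \<in> Y"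
  obtains r B where "r > 0"
    and "\<And>x y x' y'. (x, y) \<in> c_contact Y c f 0 \<Longrightarrow> (x', y') \<in> c_contact Y c f 0 \<Longrightarrow>
           x \<in> K \<Longrightarrow> x' \<in> K \<Longrightarrow> y \<in> ball y0 r \<Longrightarrow> y' \<in> ball y0 r \<Longrightarrow>
           norm (x - x') \<le> B * norm (y - y')"
proof -
  obtain r M where r: "r > 0" and M: "M \<ge> 0" and balls: "\<And>y. y \<in> ball y0 r \<Longrightarrow> ball y (4 * r) \<subseteq> Y"
    and up: "\<And>x y z. (x, y) \<in> c_contact Y c f 0 \<Longrightarrow> x \<in> K \<Longrightarrow> y \<in> ball y0 r \<Longrightarrow> z \<in> ball y (4 * r) \<Longrightarrow>
           f z - lam / 2 * (norm z)\<^sup>2 \<le> f y - lam / 2 * (norm y)\<^sup>2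
             + (grad_y c x y - lam *\<^sub>R y) \<bullet> (z - y) + M * (norm (z - y))\<^sup>2"
    and grad_lip: "\<And>x y y'. x \<in> K \<Longrightarrow> y \<in> ball y0 r \<Longrightarrow> y' \<in> ball y0 r \<Longrightarrow>
           norm (grad_y c x y - grad_y c x y') \<le> M * norm (y - y')"
    by (rule c_contact_local_paraboloids[OF assms(1,2) K y0, of f lam]) blast
  define p where "p = (\<lambda>x y. grad_y c x y - lam *\<^sub>R y)"
  have "L \<ge> 0" using inv y0 lipschitz_on_nonneg by blast
  show ?thesis
  proof (rule that[OF r])
    fix x y x' y'
    assume contact: "(x, y) \<in> c_contact Y c f 0" "(x', y') \<in> c_contact Y c f 0"
      and x: "x \<in> K" "x' \<in> K" and y: "y \<in> ball y0 r" "y' \<in> ball y0 r"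
    define d where "d = norm (y - y')"
    have "d \<le> dist y y0 + dist y0 y'" unfolding d_def by (metis dist_norm dist_triangle)
    then have close: "2 * norm (y - y') < 4 * r" using y by (simp add: d_def dist_commute)
    have p_lip: "norm (p x' y' - p x y) \<le> 4 * M * d"
      unfolding d_def p_def using balls y M up[OF contact(1) x(1) y(1)] up[OF contact(2) x(2) y(2)]
      by (intro convex_on_subgradient_lipschitz[OF conv _ _ close]) auto
    have "norm (lam *\<^sub>R (y - y') + (grad_y c x' y' - grad_y c x' y)) \<le> \<bar>lam\<bar> * d + M * d"
      using norm_triangle_ineq[of "lam *\<^sub>R (y - y')" "grad_y c x' y' - grad_y c x' y"]
        grad_lip[OF x(2) y(2,1)] by (simp add: d_def norm_minus_commute)
    moreover have "grad_y c x y - grad_y c x' y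
        = - (p x' y' - p x y) + (lam *\<^sub>R (y - y') + (grad_y c x' y' - grad_y c x' y))"
      by (simp add: p_def algebra_simps)
    then have "norm (grad_y c x y - grad_y c x' y)
        \<le> norm (p x' y' - p x y) + norm (lam *\<^sub>R (y - y') + (grad_y c x' y' - grad_y c x' y))"
      by (metis norm_minus_cancel norm_triangle_ineq)
    ultimately have "norm (grad_y c x y - grad_y c x' y) \<le> 4 * M * d + \<bar>lam\<bar> * d + M * d"
      using p_lip by linarith
    moreover have "y \<in> Y" "x \<in> X" "x' \<in> X" using balls y r x K by fastforce+
    then have "norm (x - x') \<le> L * norm (grad_y c x y - grad_y c x' y)"
      by (rule norm_le_lipschitz_inverse_grad_y[OF inv])
    ultimately have "norm (x - x') \<le> L * (4 * M * d + \<bar>lam\<bar> * d + M * d)"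
      by (meson \<open>L \<ge> 0\<close> mult_left_mono order_trans)
    then show "norm (x - x') \<le> L * (5 * M + \<bar>lam\<bar>) * norm (y - y')"
      by (simp add: d_def algebra_simps)
  qed
qed

lemma negligible_fst_if_locally_lipschitz:
  fixes \<Gamma> :: "('a::euclidean_space \<times> 'b::euclidean_space) set"
  assumes "DIM('b) \<le> DIM('a)" and "negligible (snd ` \<Gamma>)"
    and lip: "\<And>y. y \<in> snd ` \<Gamma> \<Longrightarrow> \<exists>r>0. \<exists>B. \<forall>x1 y1 x2 y2. (x1, y1) \<in> \<Gamma> \<longrightarrow> (x2, y2) \<in> \<Gamma> \<longrightarrow>
               y1 \<in> ball y r \<longrightarrow> y2 \<in> ball y r \<longrightarrow> norm (x1 - x2) \<le> B * norm (y1 - y2)"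
  shows "negligible (fst ` \<Gamma>)"
proof -
  define \<sigma> where "\<sigma> = (\<lambda>y. SOME x. (x, y) \<in> \<Gamma>)"
  have \<sigma>: "(\<sigma> y, y) \<in> \<Gamma>" if y: "y \<in> snd ` \<Gamma>" for y
  proof -
    obtain x where "(x, y) \<in> \<Gamma>" using y by force
    then show ?thesis unfolding \<sigma>_def by (rule someI)
  qed
  have "x = \<sigma> y" if xy: "(x, y) \<in> \<Gamma>" for x y
  proof -
    have y: "y \<in> snd ` \<Gamma>" using xy by force
    obtain r B where "r > 0" and rB: "\<forall>x1 y1 x2 y2. (x1, y1) \<in> \<Gamma> \<longrightarrow> (x2, y2) \<in> \<Gamma> \<longrightarrow>
        y1 \<in> ball y r \<longrightarrow> y2 \<in> ball y r \<longrightarrow> norm (x1 - x2) \<le> B * norm (y1 - y2)"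
      using lip[OF y] by blast
    have "norm (x - \<sigma> y) \<le> B * norm (y - y)"
      using rB[rule_format, OF xy \<sigma>[OF y]] \<open>r > 0\<close> by simp
    then show ?thesis by simp
  qed
  then have "fst ` \<Gamma> \<subseteq> \<sigma> ` snd ` \<Gamma>" by force
  moreover have "negligible (\<sigma> ` snd ` \<Gamma>)"
  proof (rule negligible_locally_Lipschitz_image[OF assms(1,2)])
    fix y assume y: "y \<in> snd ` \<Gamma>"
    obtain r B where "r > 0" and rB: "\<forall>x1 y1 x2 y2. (x1, y1) \<in> \<Gamma> \<longrightarrow> (x2, y2) \<in> \<Gamma> \<longrightarrow>
        y1 \<in> ball y r \<longrightarrow> y2 \<in> ball y r \<longrightarrow> norm (x1 - x2) \<le> B * norm (y1 - y2)"
      using lip[OF y] by blast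
    show "\<exists>T B. open T \<and> y \<in> T \<and> (\<forall>y'\<in>snd ` \<Gamma> \<inter> T. norm (\<sigma> y' - \<sigma> y) \<le> B * norm (y' - y))"
    proof (intro exI conjI ballI)
      show "open (ball y r)" "y \<in> ball y r" using \<open>r > 0\<close> by simp_all
      fix y' assume "y' \<in> snd ` \<Gamma> \<inter> ball y r"
      then show "norm (\<sigma> y' - \<sigma> y) \<le> B * norm (y' - y)"
        using rB \<sigma>[of y'] \<sigma>[OF y] \<open>r > 0\<close> by simp
    qed
  qed
  ultimately show ?thesis by (rule negligible_subset[rotated])
qed

lemma negligible_fst_c_contact:
  fixes c :: "'a::euclidean_space \<Rightarrow> 'a \<Rightarrow> real" and f :: "'a \<Rightarrow> real"
  assumes "open Y" and "C2_on (X \<times> Y) (\<lambda>(x, y). c x y)"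
    and "convex_on Y (\<lambda>y. f y - lam / 2 * (norm y)\<^sup>2)"
    and "\<forall>y\<in>Y. \<exists>g. (\<forall>x\<in>X. g (grad_y c x y) = x) \<and> L-lipschitz_on ((\<lambda>x. grad_y c x y) ` X) g"
    and "compact K" "K \<subseteq> X" and E: "negligible E" "E \<subseteq> Y"
  shows "negligible (fst ` (c_contact Y c f 0 \<inter> K \<times> E))"
proof (rule negligible_fst_if_locally_lipschitz)
  show "negligible (snd ` (c_contact Y c f 0 \<inter> K \<times> E))"
    using E(1) by (rule negligible_subset) auto
  fix y assume "y \<in> snd ` (c_contact Y c f 0 \<inter> K \<times> E)"
  then have "y \<in> Y" using E(2) by auto
  then obtain r B where "r > 0"
    and "\<And>x y1 x' y2. (x, y1) \<in> c_contact Y c f 0 \<Longrightarrow> (x', y2) \<in> c_contact Y c f 0 \<Longrightarrow>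
           x \<in> K \<Longrightarrow> x' \<in> K \<Longrightarrow> y1 \<in> ball y r \<Longrightarrow> y2 \<in> ball y r \<Longrightarrow>
           norm (x - x') \<le> B * norm (y1 - y2)"
    by (rule c_contact_locally_lipschitz[OF assms(1-6)]) blast
  then show "\<exists>r>0. \<exists>B. \<forall>x1 y1 x2 y2. (x1, y1) \<in> c_contact Y c f 0 \<inter> K \<times> E \<longrightarrow>
      (x2, y2) \<in> c_contact Y c f 0 \<inter> K \<times> E \<longrightarrow> y1 \<in> ball y r \<longrightarrow> y2 \<in> ball y r \<longrightarrow>
      norm (x1 - x2) \<le> B * norm (y1 - y2)"
    by blast
qed simp

lemma c_contact_mono: "\<delta> \<le> \<delta>' \<Longrightarrow> c_contact Y c f \<delta> \<subseteq> c_contact Y c f \<delta>'"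
  unfolding c_contact_def by (auto elim!: order_trans[rotated])

lemma Inter_c_contact: "(\<Inter>n. c_contact Y c f (1 / Suc n)) = c_contact Y c f 0"
proof
  show "c_contact Y c f 0 \<subseteq> (\<Inter>n. c_contact Y c f (1 / Suc n))"
    by (intro INT_greatest c_contact_mono) simp
  show "(\<Inter>n. c_contact Y c f (1 / Suc n)) \<subseteq> c_contact Y c f 0"
  proof
    fix z assume z: "z \<in> (\<Inter>n. c_contact Y c f (1 / Suc n))"
    obtain x y where z_eq: "z = (x, y)" by fastforce
    have xy: "(x, y) \<in> c_contact Y c f (1 / Suc n)" for n using z z_eq by auto
    have "ereal (c x y - f y) \<le> ctrans Y c f x + ereal e" if "e > 0" for e
    proof -
      obtain n where "1 / Suc n < e" using \<open>e > 0\<close> by (metis nat_approx_posE)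
      then have "ereal (c x y - f y) \<le> ereal (c x y - f y - 1 / Suc n) + ereal e" by simp
      also have "\<dots> \<le> ctrans Y c f x + ereal e"
        using xy by (intro add_right_mono) (auto simp: c_contact_def)
      finally show ?thesis .
    qed
    then show "z \<in> c_contact Y c f 0"
      using xy[of 0] z_eq by (auto simp: c_contact_def intro: ereal_le_epsilon2)
  qed
qed

lemma compact_c_contact_Int:
  fixes c :: "'a::euclidean_space \<Rightarrow> 'a \<Rightarrow> real"
  assumes K: "compact K1" "compact K2" "K1 \<subseteq> X" "K2 \<subseteq> Y"
    and cc: "continuous_on (X \<times> Y) (\<lambda>(x, y). c x y)" and fc: "continuous_on Y f"
  shows "compact (c_contact Y c f \<delta> \<inter> K1 \<times> K2)"
proof -
  define h where "h = (\<lambda>z p. c (fst p) z - f z - (c (fst p) (snd p) - f (snd p) - \<delta>))"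
  have "c_contact Y c f \<delta> \<inter> K1 \<times> K2 = K1 \<times> K2 \<inter> (\<Inter>z\<in>Y. K1 \<times> K2 \<inter> h z -` {0..})"
    using K(4) by (auto simp: c_contact_def h_def ctrans_def le_INF_iff)
  moreover have "continuous_on (K1 \<times> K2) (h z)" if "z \<in> Y" for z
  proof -
    have "continuous_on (K1 \<times> K2) snd" "snd ` (K1 \<times> K2) \<subseteq> Y"
      using K by (auto intro: continuous_intros)
    from continuous_on_compose2[OF fc this]
    have "continuous_on (K1 \<times> K2) (\<lambda>p. f (snd p))" by simp
    moreover have "(\<lambda>p. (fst p, z)) ` (K1 \<times> K2) \<subseteq> X \<times> Y" using K that by auto
    from continuous_on_compose2[OF cc _ this]
    have "continuous_on (K1 \<times> K2) (\<lambda>p. c (fst p) z)"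
      by (simp add: case_prod_unfold continuous_intros)
    moreover have "continuous_on (K1 \<times> K2) (\<lambda>p. c (fst p) (snd p))"
      using continuous_on_subset[OF cc, of "K1 \<times> K2"] K by (auto simp: case_prod_unfold)
    ultimately show ?thesis
      unfolding h_def by (intro continuous_intros)
  qed
  then have "closed (\<Inter>z\<in>Y. K1 \<times> K2 \<inter> h z -` {0..})"
    using K by (intro closed_INT ballI continuous_closed_preimage compact_imp_closed[OF compact_Times]) auto
  ultimately show ?thesis using K by (metis compact_Int_closed compact_Times)
qed

lemma fst_Inter_compact_decseq:
  fixes \<Gamma> :: "nat \<Rightarrow> ('a::heine_borel \<times> 'b::heine_borel) set"
  assumes cpt: "\<And>n. compact (\<Gamma> n)" and dec: "decseq \<Gamma>"
  shows "(\<Inter>n. fst ` \<Gamma> n) = fst ` (\<Inter>n. \<Gamma> n)"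
proof
  show "(\<Inter>n. fst ` \<Gamma> n) \<subseteq> fst ` (\<Inter>n. \<Gamma> n)"
  proof
    fix x assume x: "x \<in> (\<Inter>n. fst ` \<Gamma> n)"
    define A where "A = (\<lambda>n. snd ` (\<Gamma> n \<inter> {x} \<times> UNIV))"
    have "compact (A n)" for n
      unfolding A_def using cpt
      by (intro compact_continuous_image continuous_intros compact_Int_closed closed_Times) auto
    moreover have "A n \<noteq> {}" for n
      using x by (force simp: A_def)
    moreover have "A n \<subseteq> A m" if "m \<le> n" for m n
      using dec that by (auto simp: A_def decseq_def)
    ultimately obtain y where "y \<in> (\<Inter>n. A n)" using compact_nest[of A] by blast
    then show "x \<in> fst ` (\<Inter>n. \<Gamma> n)" by (force simp: A_def)
  qed
qed auto

section \<open>Couplings\<close>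

lemma couplingsD:
  assumes "\<pi> \<in> couplings \<mu> \<nu>"
  shows "prob_space \<pi>" "sets \<pi> = sets borel" "distr \<pi> borel fst = \<mu>" "distr \<pi> borel snd = \<nu>"
  using assms by (auto simp: couplings_def)

lemma coupling_measurable_fst_snd:
  fixes \<pi> :: "('a::euclidean_space \<times> 'a) measure"
  assumes "sets \<pi> = sets borel"
  shows "fst \<in> borel_measurable \<pi>" "snd \<in> borel_measurable \<pi>"
  using assms by (simp_all add: measurable_cong_sets[OF assms refl] borel_measurable_continuous_onI continuous_intros)

lemma coupling_measure_Times_UNIV:
  fixes \<pi> :: "('a::euclidean_space \<times> 'a) measure"
  assumes "\<pi> \<in> couplings \<mu> \<nu>" and "A \<in> sets borel"
  shows "measure \<pi> (A \<times> UNIV) = measure \<mu> A" "measure \<pi> (UNIV \<times> A) = measure \<nu> A"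
proof -
  note \<pi> = couplingsD[OF assms(1)]
  have "space \<pi> = UNIV" using sets_eq_imp_space_eq[OF \<pi>(2)] by simp
  then have "fst -` A \<inter> space \<pi> = A \<times> UNIV" "snd -` A \<inter> space \<pi> = UNIV \<times> A" by auto
  then show "measure \<pi> (A \<times> UNIV) = measure \<mu> A" "measure \<pi> (UNIV \<times> A) = measure \<nu> A"
    using measure_distr[OF coupling_measurable_fst_snd(1)[OF \<pi>(2)], of A]
      measure_distr[OF coupling_measurable_fst_snd(2)[OF \<pi>(2)], of A] \<pi> assms(2)
    by simp_all
qed

lemma AE_coupling_fst:
  fixes \<pi> :: "('a::euclidean_space \<times> 'a) measure"
  assumes "\<pi> \<in> couplings \<mu> \<nu>" and "AE x in \<mu>. P x"
  shows "AE z in \<pi>. P (fst z)"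
  using AE_distrD[OF coupling_measurable_fst_snd(1)] couplingsD[OF assms(1)] assms(2) by metis

lemma AE_coupling_snd:
  fixes \<pi> :: "('a::euclidean_space \<times> 'a) measure"
  assumes "\<pi> \<in> couplings \<mu> \<nu>" and "AE y in \<nu>. P y"
  shows "AE z in \<pi>. P (snd z)"
  using AE_distrD[OF coupling_measurable_fst_snd(2)] couplingsD[OF assms(1)] assms(2) by metis

lemma prob_on_AE_in:
  assumes "prob_on S m" and "S \<in> sets borel"
  shows "AE x in m. x \<in> S"
proof -
  interpret prob_space m using assms(1) by (simp add: prob_on_def)
  show ?thesis
    using assms by (simp add: prob_on_def AE_in_set_eq_1 emeasure_eq_measure)
qed

lemma prob_on_compact_approx:
  fixes m :: "'a::euclidean_space measure"
  assumes "prob_on S m" and "S \<in> sets borel" and "\<epsilon> > 0"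
  obtains K where "compact K" "K \<subseteq> S" "measure m (UNIV - K) < \<epsilon>"
proof -
  interpret prob_space m using assms(1) by (simp add: prob_on_def)
  have sets: "sets m = sets borel" and S1: "emeasure m S = 1" using assms(1) by (auto simp: prob_on_def)
  have "ennreal (1 - \<epsilon>) < emeasure m S" using assms(3) S1 by (simp add: ennreal_lessI)
  also have "emeasure m S = (SUP K \<in> {K. K \<subseteq> S \<and> compact K}. emeasure m K)"
    using sets assms(2) by (intro inner_regular) auto
  finally obtain K where K: "K \<subseteq> S" "compact K" "ennreal (1 - \<epsilon>) < emeasure m K"
    by (auto simp: less_SUP_iff)
  have "K \<in> sets m" using K(2) sets by (simp add: compact_imp_closed)
  moreover have "space m = UNIV" using sets_eq_imp_space_eq[OF sets] by simp
  ultimately have "measure m (UNIV - K) = 1 - measure m K" using prob_compl by metis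
  moreover have "\<not> measure m K \<le> 1 - \<epsilon>"
    using K(3) ennreal_leI[of "measure m K" "1 - \<epsilon>"] by (auto simp: emeasure_eq_measure)
  ultimately show ?thesis using K that by simp
qed

lemma integrable_coupling_gap:
  fixes \<pi> :: "('a::euclidean_space \<times> 'a) measure" and G F :: "'a \<Rightarrow> real"
    and c :: "'a \<Rightarrow> 'a \<Rightarrow> real"
  assumes \<pi>: "\<pi> \<in> couplings \<mu> \<nu>" and G: "integrable \<mu> G" and F: "integrable \<nu> F"
    and XY: "open X" "open Y" and c0: "\<forall>x\<in>X. \<forall>y\<in>Y. 0 \<le> c x y"
    and cc: "continuous_on (X \<times> Y) (\<lambda>(x, y). c x y)"
    and I: "(\<integral>\<^sup>+ z\<in>X \<times> Y. ennreal (c (fst z) (snd z)) \<partial>\<pi>) < ennreal I"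
  defines "H \<equiv> \<lambda>z. indicator (X \<times> Y) z * c (fst z) (snd z) - G (fst z) - F (snd z)"
  shows "integrable \<pi> H" and "integral\<^sup>L \<pi> H < I - integral\<^sup>L \<mu> G - integral\<^sup>L \<nu> F"
proof -
  note \<pi>' = couplingsD[OF \<pi>]
  note m = coupling_measurable_fst_snd[OF \<pi>'(2)]
  define C where "C = (\<lambda>z. indicator (X \<times> Y) z * c (fst z) (snd z))"
  have "(\<lambda>z. indicator (X \<times> Y) z *\<^sub>R c (fst z) (snd z)) \<in> borel_measurable borel"
    using XY cc by (intro borel_measurable_continuous_on_indicator) (auto simp: open_Times case_prod_unfold)
  then have Cm: "C \<in> borel_measurable \<pi>"
    by (simp add: C_def measurable_cong_sets[OF \<pi>'(2) refl])
  have C0: "AE z in \<pi>. 0 \<le> C z" using c0 by (auto simp: C_def indicator_def)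
  have nnC: "(\<integral>\<^sup>+ z. ennreal (C z) \<partial>\<pi>) = (\<integral>\<^sup>+ z\<in>X \<times> Y. ennreal (c (fst z) (snd z)) \<partial>\<pi>)"
    by (intro nn_integral_cong) (auto simp: C_def indicator_def)
  have intC: "integrable \<pi> C"
    using Cm C0 I nnC by (intro integrableI_nonneg) (auto simp: less_top[symmetric] intro: order.strict_trans)
  have "integral\<^sup>L \<pi> C = enn2real (\<integral>\<^sup>+ z\<in>X \<times> Y. ennreal (c (fst z) (snd z)) \<partial>\<pi>)"
    using Cm C0 nnC by (simp add: integral_eq_nn_integral)
  also have "\<dots> < I"
    using I by (metis enn2real_less_iff ennreal_less_top order.strict_trans)
  finally have C_less: "integral\<^sup>L \<pi> C < I" .
  have "sets \<mu> = sets borel" "sets \<nu> = sets borel"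
    by (metis \<pi>'(3) sets_distr) (metis \<pi>'(4) sets_distr)
  then have Gb: "G \<in> borel_measurable borel" and Fb: "F \<in> borel_measurable borel"
    using borel_measurable_integrable[OF G] borel_measurable_integrable[OF F]
      measurable_cong_sets[OF _ refl]
    by metis+
  have "integrable \<pi> (\<lambda>z. G (fst z))" "integral\<^sup>L \<pi> (\<lambda>z. G (fst z)) = integral\<^sup>L \<mu> G"
    using integrable_distr_eq[OF m(1) Gb] integral_distr[OF m(1) Gb] \<pi>'(3) G by simp_all
  moreover have "integrable \<pi> (\<lambda>z. F (snd z))" "integral\<^sup>L \<pi> (\<lambda>z. F (snd z)) = integral\<^sup>L \<nu> F"
    using integrable_distr_eq[OF m(2) Fb] integral_distr[OF m(2) Fb] \<pi>'(4) F by simp_all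
  ultimately show "integrable \<pi> H" "integral\<^sup>L \<pi> H < I - integral\<^sup>L \<mu> G - integral\<^sup>L \<nu> F"
    using intC C_less by (simp_all add: H_def C_def[symmetric] Bochner_Integration.integral_diff)
qed

definition potential_gap :: "'a set \<Rightarrow> 'a set \<Rightarrow> ('a \<Rightarrow> 'a \<Rightarrow> real) \<Rightarrow> ('a \<Rightarrow> real) \<Rightarrow> 'a \<times> 'a \<Rightarrow> real" where
  "potential_gap X Y c f z = indicator (X \<times> Y) z * c (fst z) (snd z)
     - indicator X (fst z) * real_of_ereal (ctrans Y c f (fst z)) - indicator Y (snd z) * f (snd z)"

lemma AE_potential_gap:
  fixes X Y :: "'a::euclidean_space set"
  assumes \<pi>: "\<pi> \<in> couplings \<mu> \<nu>" and \<mu>: "prob_on X \<mu>" and \<nu>: "prob_on Y \<nu>"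
    and XY: "open X" "open Y"
    and fin: "AE x in \<mu>. x \<in> X \<longrightarrow> \<bar>ctrans Y c f x\<bar> \<noteq> \<infinity>"
  shows "AE z in \<pi>. 0 \<le> potential_gap X Y c f z
           \<and> (z \<notin> c_contact Y c f \<delta> \<longrightarrow> \<delta> \<le> potential_gap X Y c f z)"
proof -
  have "AE z in \<pi>. fst z \<in> X \<and> snd z \<in> Y \<and> \<bar>ctrans Y c f (fst z)\<bar> \<noteq> \<infinity>"
    using AE_coupling_fst[OF \<pi> prob_on_AE_in[OF \<mu> borel_open[OF XY(1)]]] AE_coupling_fst[OF \<pi> fin]
      AE_coupling_snd[OF \<pi> prob_on_AE_in[OF \<nu> borel_open[OF XY(2)]]]
    by eventually_elim auto
  then show ?thesis
  proof eventually_elim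
    case (elim z)
    obtain x y where z: "z = (x, y)" by fastforce
    have gap: "potential_gap X Y c f z = c x y - f y - real_of_ereal (ctrans Y c f x)"
      using elim z by (simp add: potential_gap_def)
    have "ctrans Y c f x \<le> ereal (c x y - f y)"
      unfolding ctrans_def using elim z by (auto intro: INF_lower)
    moreover have "ctrans Y c f x < ereal (c x y - f y - \<delta>)" if "z \<notin> c_contact Y c f \<delta>"
      using that elim z by (auto simp: c_contact_def)
    ultimately show ?case
      using elim z unfolding gap by (cases "ctrans Y c f x") auto
  qed
qed

lemma coupling_with_small_gap:
  fixes X Y :: "'a::euclidean_space set" and c :: "'a \<Rightarrow> 'a \<Rightarrow> real"
  assumes XY: "open X" "open Y" and c0: "\<forall>x\<in>X. \<forall>y\<in>Y. 0 \<le> c x y"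
    and cc: "continuous_on (X \<times> Y) (\<lambda>(x, y). c x y)"
    and opt: "optimal_potential X Y c \<mu> \<nu> f" and \<eta>: "\<eta> > 0"
  obtains \<pi> where "\<pi> \<in> couplings \<mu> \<nu>" "integrable \<pi> (potential_gap X Y c f)"
    "integral\<^sup>L \<pi> (potential_gap X Y c f) < \<eta>"
proof -
  define G where "G = (\<lambda>x. indicator X x *\<^sub>R real_of_ereal (ctrans Y c f x))"
  define F where "F = (\<lambda>y. indicator Y y *\<^sub>R f y)"
  define D where "D = integral\<^sup>L \<mu> G + integral\<^sup>L \<nu> F"
  have G: "integrable \<mu> G" and F: "integrable \<nu> F" and Kc: "enn2ereal (Kc X Y c \<mu> \<nu>) = ereal D"
    using opt by (auto simp: optimal_potential_def set_integrable_def set_lebesgue_integral_def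
        G_def F_def D_def)
  then have "Kc X Y c \<mu> \<nu> = ennreal D" "D \<ge> 0"
    by (metis enn2ereal_ennreal enn2ereal_inject enn2ereal_nonneg ereal_less_eq(5))+
  then have "Kc X Y c \<mu> \<nu> < ennreal (D + \<eta>)"
    using \<eta> by (simp add: ennreal_lessI)
  then obtain \<pi> where \<pi>: "\<pi> \<in> couplings \<mu> \<nu>"
    and I: "(\<integral>\<^sup>+ z\<in>X \<times> Y. ennreal (c (fst z) (snd z)) \<partial>\<pi>) < ennreal (D + \<eta>)"
    unfolding Kc_def by (auto simp: INF_less_iff)
  have "potential_gap X Y c f = (\<lambda>z. indicator (X \<times> Y) z * c (fst z) (snd z) - G (fst z) - F (snd z))"
    by (simp add: G_def F_def potential_gap_def fun_eq_iff)
  with integrable_coupling_gap[OF \<pi> G F XY c0 cc I] show ?thesis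
    using that[OF \<pi>] by (simp add: D_def)
qed

lemma nearly_optimal_coupling:
  fixes X Y :: "'a::euclidean_space set" and c :: "'a \<Rightarrow> 'a \<Rightarrow> real"
  assumes XY: "open X" "open Y" and c0: "\<forall>x\<in>X. \<forall>y\<in>Y. 0 \<le> c x y"
    and cc: "continuous_on (X \<times> Y) (\<lambda>(x, y). c x y)"
    and \<mu>: "prob_on X \<mu>" and \<nu>: "prob_on Y \<nu>" and opt: "optimal_potential X Y c \<mu> \<nu> f"
    and \<delta>: "\<delta> > 0" and \<epsilon>: "\<epsilon> > 0"
  obtains \<pi> B where "\<pi> \<in> couplings \<mu> \<nu>" "B \<in> sets \<pi>" "measure \<pi> B < \<epsilon>"
    and "X \<times> Y - c_contact Y c f \<delta> \<subseteq> B"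
proof -
  define H where "H = potential_gap X Y c f"
  have "\<epsilon> * \<delta> > 0" using \<epsilon> \<delta> by simp
  then obtain \<pi> where \<pi>: "\<pi> \<in> couplings \<mu> \<nu>" and intH: "integrable \<pi> H" and "integral\<^sup>L \<pi> H < \<epsilon> * \<delta>"
    unfolding H_def by (rule coupling_with_small_gap[OF XY c0 cc opt]) blast
  interpret \<pi>: prob_space \<pi> using couplingsD[OF \<pi>] by simp
  have fin: "AE x in \<mu>. x \<in> X \<longrightarrow> \<bar>ctrans Y c f x\<bar> \<noteq> \<infinity>"
    using opt by (simp add: optimal_potential_def)
  have gap: "AE z in \<pi>. 0 \<le> H z \<and> (z \<notin> c_contact Y c f \<delta> \<longrightarrow> \<delta> \<le> H z)"
    unfolding H_def by (rule AE_potential_gap[OF \<pi> \<mu> \<nu> XY fin])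
  then have H0: "AE z in \<pi>. 0 \<le> H z" by eventually_elim auto
  obtain N where N: "{z \<in> space \<pi>. \<not> (0 \<le> H z \<and> (z \<notin> c_contact Y c f \<delta> \<longrightarrow> \<delta> \<le> H z))} \<subseteq> N"
    and "emeasure \<pi> N = 0" "N \<in> sets \<pi>"
    using gap by (rule AE_E)
  then have "N \<in> null_sets \<pi>" by (simp add: null_sets_def)
  define B where "B = {z \<in> space \<pi>. \<delta> \<le> H z} \<union> N"
  have Hm: "H \<in> borel_measurable \<pi>" using intH by (rule borel_measurable_integrable)
  have "measure \<pi> B = measure \<pi> {z \<in> space \<pi>. \<delta> \<le> H z}"
    using Hm \<open>N \<in> null_sets \<pi>\<close> by (simp add: B_def measure_Un_null_set)
  also have "\<dots> \<le> integral\<^sup>L \<pi> H / \<delta>"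
    by (rule integral_Markov_inequality_measure[OF intH sets.top H0 \<delta>])
  also have "\<dots> < \<epsilon>" using \<open>integral\<^sup>L \<pi> H < \<epsilon> * \<delta>\<close> \<delta> by (simp add: divide_less_eq)
  finally have "measure \<pi> B < \<epsilon>" .
  moreover have "B \<in> sets \<pi>" using Hm \<open>N \<in> sets \<pi>\<close> by (auto simp: B_def)
  moreover have "X \<times> Y - c_contact Y c f \<delta> \<subseteq> B"
  proof
    fix z assume z: "z \<in> X \<times> Y - c_contact Y c f \<delta>"
    have sp: "space \<pi> = UNIV" using sets_eq_imp_space_eq[OF couplingsD(2)[OF \<pi>]] by simp
    show "z \<in> B"
    proof (cases "z \<in> N")
      case False
      then have "\<delta> \<le> H z" using N z sp by blast
      then show ?thesis using sp by (simp add: B_def)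
    qed (simp add: B_def)
  qed
  ultimately show ?thesis using \<pi> that by blast
qed

section \<open>Absolute continuity of the target measure\<close>

lemma C2_on_imp_continuous_on:
  assumes "C2_on S g"
  shows "continuous_on S g"
proof -
  obtain g' :: "'a \<Rightarrow> 'a \<Rightarrow>\<^sub>L real" where "\<forall>z\<in>S. (g has_derivative blinfun_apply (g' z)) (at z)"
    using assms unfolding C2_on_def by blast
  then show ?thesis
    by (intro continuous_at_imp_continuous_on) (auto dest: has_derivative_continuous)
qed

lemma continuous_on_if_convex_on_minus_quadratic:
  fixes f :: "'a::euclidean_space \<Rightarrow> real"
  assumes "open Y" and "convex_on Y (\<lambda>y. f y - lam / 2 * (norm y)\<^sup>2)"
  shows "continuous_on Y f"
proof -
  have "continuous_on Y (\<lambda>y. (f y - lam / 2 * (norm y)\<^sup>2) + lam / 2 * (norm y)\<^sup>2)"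
    by (intro continuous_on_add convex_on_continuous[OF assms] continuous_intros)
  then show ?thesis by simp
qed

lemma measure_fst_c_contact_less:
  fixes c :: "'a::euclidean_space \<Rightarrow> 'a \<Rightarrow> real" and f :: "'a \<Rightarrow> real"
  assumes Y: "open Y" and C2: "C2_on (X \<times> Y) (\<lambda>(x, y). c x y)"
    and conv: "convex_on Y (\<lambda>y. f y - lam / 2 * (norm y)\<^sup>2)"
    and inv: "\<forall>y\<in>Y. \<exists>g. (\<forall>x\<in>X. g (grad_y c x y) = x) \<and> L-lipschitz_on ((\<lambda>x. grad_y c x y) ` X) g"
    and \<mu>: "prob_on X \<mu>" and ac: "absolutely_continuous lborel \<mu>"
    and K1: "compact K1" "K1 \<subseteq> X" and K2: "compact K2" "K2 \<subseteq> Y" "negligible K2"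
    and \<epsilon>: "\<epsilon> > 0"
  obtains \<delta> where "\<delta> > 0" "measure \<mu> (fst ` (c_contact Y c f \<delta> \<inter> K1 \<times> K2)) < \<epsilon>"
proof -
  interpret \<mu>: prob_space \<mu> using \<mu> by (simp add: prob_on_def)
  have sets: "sets \<mu> = sets borel" using \<mu> by (simp add: prob_on_def)
  define \<Gamma> where "\<Gamma> = (\<lambda>n::nat. c_contact Y c f (1 / Suc n) \<inter> K1 \<times> K2)"
  define P where "P = (\<lambda>n. fst ` \<Gamma> n)"
  have "compact (\<Gamma> n)" for n
    unfolding \<Gamma>_def using K1 K2 C2_on_imp_continuous_on[OF C2]
      continuous_on_if_convex_on_minus_quadratic[OF Y conv]
    by (intro compact_c_contact_Int) auto
  moreover have "decseq \<Gamma>"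
    unfolding decseq_def \<Gamma>_def
    by (intro allI impI Int_mono c_contact_mono subset_refl) (simp add: frac_le)
  ultimately have "(\<Inter>n. P n) = fst ` (\<Inter>n. \<Gamma> n)"
    unfolding P_def by (rule fst_Inter_compact_decseq)
  also have "(\<Inter>n. \<Gamma> n) = c_contact Y c f 0 \<inter> K1 \<times> K2"
    unfolding \<Gamma>_def Inter_c_contact[symmetric] by blast
  finally have "negligible (\<Inter>n. P n)"
    using negligible_fst_c_contact[OF Y C2 conv inv K1 K2(3,2)] by simp
  moreover have P_closed: "closed (P n)" for n
    unfolding P_def using \<open>\<And>n. compact (\<Gamma> n)\<close>
    by (intro compact_imp_closed compact_continuous_image continuous_intros)
  ultimately have "(\<Inter>n. P n) \<in> null_sets lborel"
    by (simp add: negligible_iff_null_sets null_sets_completion_iff)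
  then have "measure \<mu> (\<Inter>n. P n) = 0"
    using ac by (auto simp: absolutely_continuous_def measure_def null_sets_def)
  moreover have "(\<lambda>n. measure \<mu> (P n)) \<longlonglongrightarrow> measure \<mu> (\<Inter>n. P n)"
    using P_closed sets \<open>decseq \<Gamma>\<close>
    by (intro \<mu>.finite_Lim_measure_decseq) (auto simp: P_def decseq_def image_mono)
  ultimately have "\<forall>\<^sub>F n in sequentially. measure \<mu> (P n) < \<epsilon>"
    using \<epsilon> by (metis order_tendstoD(2))
  then obtain n where "measure \<mu> (P n) < \<epsilon>" by (auto simp: eventually_sequentially)
  then show ?thesis using that[of "1 / Suc n"] by (simp add: P_def \<Gamma>_def)
qed

lemma coupling_measure_snd_le:
  fixes \<pi> :: "('a::euclidean_space \<times> 'a) measure"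
  assumes \<pi>: "\<pi> \<in> couplings \<mu> \<nu>" and borel: "A1 \<in> sets borel" "A2 \<in> sets borel" "K \<in> sets borel"
    and B: "B \<in> sets \<pi>" and cover: "UNIV \<times> K \<subseteq> A1 \<times> UNIV \<union> A2 \<times> UNIV \<union> B"
  shows "measure \<nu> K \<le> measure \<mu> A1 + measure \<mu> A2 + measure \<pi> B"
proof -
  interpret \<pi>: prob_space \<pi> using couplingsD[OF \<pi>] by simp
  have "A1 \<times> UNIV \<in> sets borel" "A2 \<times> UNIV \<in> sets borel"
    using borel by (auto intro!: borel_Times)
  then have sets: "A1 \<times> UNIV \<in> sets \<pi>" "A2 \<times> UNIV \<in> sets \<pi>"
    using couplingsD(2)[OF \<pi>] by simp_all
  have "measure \<nu> K = measure \<pi> (UNIV \<times> K)"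
    using coupling_measure_Times_UNIV(2)[OF \<pi> borel(3)] by simp
  also have "\<dots> \<le> measure \<pi> (A1 \<times> UNIV \<union> A2 \<times> UNIV \<union> B)"
    using cover sets B by (intro \<pi>.finite_measure_mono) auto
  also have "\<dots> \<le> measure \<pi> (A1 \<times> UNIV \<union> A2 \<times> UNIV) + measure \<pi> B"
    using sets B by (intro measure_subadditive) auto
  also have "\<dots> \<le> measure \<pi> (A1 \<times> UNIV) + measure \<pi> (A2 \<times> UNIV) + measure \<pi> B"
    using sets measure_subadditive[of "A1 \<times> UNIV" \<pi> "A2 \<times> UNIV"] by simp
  also have "\<dots> = measure \<mu> A1 + measure \<mu> A2 + measure \<pi> B"
    using coupling_measure_Times_UNIV(1)[OF \<pi>] borel by simp
  finally show ?thesis .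
qed

lemma measure_negligible_compact_eq_0:
  fixes X Y :: "'a::euclidean_space set" and c :: "'a \<Rightarrow> 'a \<Rightarrow> real" and f :: "'a \<Rightarrow> real"
  assumes XY: "open X" "open Y" and c0: "\<forall>x\<in>X. \<forall>y\<in>Y. 0 \<le> c x y"
    and C2: "C2_on (X \<times> Y) (\<lambda>(x, y). c x y)"
    and \<mu>: "prob_on X \<mu>" and \<nu>: "prob_on Y \<nu>" and opt: "optimal_potential X Y c \<mu> \<nu> f"
    and conv: "convex_on Y (\<lambda>y. f y - lam / 2 * (norm y)\<^sup>2)"
    and ac: "absolutely_continuous lborel \<mu>"
    and inv: "\<forall>y\<in>Y. \<exists>g. (\<forall>x\<in>X. g (grad_y c x y) = x) \<and> L-lipschitz_on ((\<lambda>x. grad_y c x y) ` X) g"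
    and K: "compact K" "K \<subseteq> Y" "negligible K"
  shows "measure \<nu> K = 0"
proof -
  have bound: "measure \<nu> K \<le> 3 * \<epsilon>" if \<epsilon>: "\<epsilon> > 0" for \<epsilon>
  proof -
    obtain K1 where K1: "compact K1" "K1 \<subseteq> X" "measure \<mu> (UNIV - K1) < \<epsilon>"
      using prob_on_compact_approx[OF \<mu> borel_open[OF XY(1)] \<epsilon>] .
    obtain \<delta> where \<delta>: "\<delta> > 0" and P: "measure \<mu> (fst ` (c_contact Y c f \<delta> \<inter> K1 \<times> K)) < \<epsilon>"
      using measure_fst_c_contact_less[OF XY(2) C2 conv inv \<mu> ac K1(1,2) K \<epsilon>] .
    obtain \<pi> B where \<pi>: "\<pi> \<in> couplings \<mu> \<nu>" and B: "B \<in> sets \<pi>" "measure \<pi> B < \<epsilon>"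
      "X \<times> Y - c_contact Y c f \<delta> \<subseteq> B"
      using nearly_optimal_coupling[OF XY c0 C2_on_imp_continuous_on[OF C2] \<mu> \<nu> opt \<delta> \<epsilon>] .
    define P where "P = fst ` (c_contact Y c f \<delta> \<inter> K1 \<times> K)"
    have "compact P"
      unfolding P_def
      by (intro compact_continuous_image continuous_intros compact_c_contact_Int[OF K1(1) K(1) K1(2) K(2)]
          C2_on_imp_continuous_on[OF C2] continuous_on_if_convex_on_minus_quadratic[OF XY(2) conv])
    then have borel: "UNIV - K1 \<in> sets borel" "P \<in> sets borel" "K \<in> sets borel"
      using K1(1) K(1) by (auto intro: borel_open borel_closed compact_imp_closed)
    have "UNIV \<times> K \<subseteq> (UNIV - K1) \<times> UNIV \<union> P \<times> UNIV \<union> B"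
      using B(3) K1(2) K(2) by (force simp: P_def)
    then have "measure \<nu> K \<le> measure \<mu> (UNIV - K1) + measure \<mu> P + measure \<pi> B"
      by (rule coupling_measure_snd_le[OF \<pi> borel B(1)])
    then show ?thesis using K1(3) P B(2) by (simp add: P_def)
  qed
  have "measure \<nu> K \<le> 0"
  proof (rule field_le_epsilon)
    fix e :: real assume "e > 0"
    then show "measure \<nu> K \<le> 0 + e" using bound[of "e / 3"] by simp
  qed
  then show ?thesis using measure_nonneg[of \<nu> K] by linarith
qed

lemma absolutely_continuous_if_negligible_compact:
  fixes \<nu> :: "'a::euclidean_space measure"
  assumes \<nu>: "prob_on Y \<nu>" and Y: "Y \<in> sets borel"
    and null: "\<And>K. compact K \<Longrightarrow> K \<subseteq> Y \<Longrightarrow> negligible K \<Longrightarrow> measure \<nu> K = 0"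
  shows "absolutely_continuous lborel \<nu>"
  unfolding absolutely_continuous_def
proof
  interpret prob_space \<nu> using \<nu> by (simp add: prob_on_def)
  have sets: "sets \<nu> = sets borel" using \<nu> by (simp add: prob_on_def)
  fix E :: "'a set" assume E: "E \<in> null_sets lborel"
  then have Eb: "E \<in> sets borel" and "negligible E"
    using negligible_iff_null_sets null_sets_completionI by auto
  have "emeasure \<nu> (E \<inter> Y) = (SUP K \<in> {K. K \<subseteq> E \<inter> Y \<and> compact K}. emeasure \<nu> K)"
    using sets Eb Y by (intro inner_regular) auto
  also have "\<dots> = (SUP K \<in> {K. K \<subseteq> E \<inter> Y \<and> compact K}. 0)"
    using null \<open>negligible E\<close> by (intro SUP_cong) (auto simp: emeasure_eq_measure intro: negligible_subset)
  also have "\<dots> = 0"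
  proof (rule SUP_const)
    show "{K. K \<subseteq> E \<inter> Y \<and> compact K} \<noteq> {}" using compact_empty by blast
  qed
  finally have EY: "E \<inter> Y \<in> null_sets \<nu>" using Eb Y sets by (auto simp: null_sets_def)
  obtain N where N: "{x \<in> space \<nu>. x \<notin> Y} \<subseteq> N" "emeasure \<nu> N = 0" "N \<in> sets \<nu>"
    using prob_on_AE_in[OF \<nu> Y] by (rule AE_E)
  have "N \<in> null_sets \<nu>" using N(2,3) by (simp add: null_sets_def)
  with EY have "(E \<inter> Y) \<union> N \<in> null_sets \<nu>" by (rule null_sets.Un)
  moreover have "E \<in> sets \<nu>" using Eb sets by simp
  moreover have "E \<subseteq> (E \<inter> Y) \<union> N" using N(1) sets_eq_imp_space_eq[OF sets] by auto
  ultimately show "E \<in> null_sets \<nu>" by (rule null_sets_subset)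
qed

theorem mainTheorem14:
  fixes X Y :: "'a::euclidean_space set"
    and c :: "'a \<Rightarrow> 'a \<Rightarrow> real"
    and x0 y0 :: 'a
    and \<mu> \<nu> :: "'a measure"
    and f :: "'a \<Rightarrow> real"
    and lam :: real
  assumes "standing_assms X Y c x0 y0"
    and "Pcost_Y Y c x0 \<nu>"
    and "Pcost_X X c y0 \<mu>"
    and "optimal_potential X Y c \<mu> \<nu> f"
    and "convex_on Y (\<lambda>y. f y - lam / 2 * (norm y)\<^sup>2)"
    and "absolutely_continuous lborel \<mu>"
    and "\<exists>L. \<forall>y\<in>Y. \<exists>g. (\<forall>x\<in>X. g (grad_y c x y) = x) \<and>
                         L-lipschitz_on ((\<lambda>x. grad_y c x y) ` X) g"
  shows "absolutely_continuous lborel \<nu>"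
proof -
  have XY: "open X" "open Y" and c0: "\<forall>x\<in>X. \<forall>y\<in>Y. 0 \<le> c x y"
    and C2: "C2_on (X \<times> Y) (\<lambda>(x, y). c x y)"
    using assms(1) by (auto simp: standing_assms_def)
  have \<mu>: "prob_on X \<mu>" and \<nu>: "prob_on Y \<nu>"
    using assms(2,3) by (auto simp: Pcost_X_def Pcost_Y_def)
  obtain L where "\<forall>y\<in>Y. \<exists>g. (\<forall>x\<in>X. g (grad_y c x y) = x) \<and> L-lipschitz_on ((\<lambda>x. grad_y c x y) ` X) g"
    using assms(7) by blast
  from measure_negligible_compact_eq_0[OF XY c0 C2 \<mu> \<nu> assms(4,5,6) this]
  show ?thesis
    using absolutely_continuous_if_negligible_compact[OF \<nu> borel_open[OF XY(2)]] by blast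
qed

end
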